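(* Let $p$ be a prime, $n\ge1$, $(n_1,\dots,n_s)$ a partition of $n$, and for each $i$ let $1,\omega_i,\dots,\omega_i^{n_i-1}$ be a basis of $\mathbb{F}_{p^{n_i}}$ over $\mathbb{F}_p$ (with $\omega_i$ a root of an irreducible polynomial of degree $n_i$ over $\mathbb{F}_p$). Let $\mathbf{z}=(z_1,\dots,z_s)$ with $z_i\in\mathbb{F}_{p^{n_i}}\setminus\{0\}$. Let $A,A'\in\mathrm{GL}_n(\mathbb{F}_p)$, whose rows, indexed in blocks as $(i,j)$ with $1\le i\le s$, $1\le j\le n_i$, define linear forms $L_{i,j}$ and $L'_{i,j}$ respectively, and put $\lambda_i(\mathbf{x})=\sum_{j}L_{i,j}(\mathbf{x})\omega_i^{j-1}$, $\lambda_i'(\mathbf{y})=\sum_jL'_{i,j}(\mathbf{y})\omega_i^{j-1}$. Define the lattice $$\mathcal{L}_{\mathbf{z}}=\{(\mathbf{x},\mathbf{y})\in\mathbb{Z}^{2n}:\lambda_i(\mathbf{x})=z_i\lambda_i'(\mathbf{y})\text{ in }\mathbb{F}_{p^{n_i}}\text{ for }1\le i\le s\}.$$ Then there exist $A'',A'''\in\mathrm{GL}_n(\mathbb{F}_p)$, with associated linear forms $L''_{i,j},L'''_{i,j}$ and $\lambda_i''(\mathbf{v})=\sum_jL''_{i,j}(\mathbf{v})\omega_i^{j-1}$, $\lambda_i'''(\mathbf{u})=\sum_jL'''_{i,j}(\mathbf{u})\omega_i^{j-1}$, such that $$p\mathcal{L}_{\mathbf{z}}^*=\{(\mathbf{u},\mathbf{v})\in\mathbb{Z}^{2n}:\lambda_i''(\mathbf{v})=z_i\lambda_i'''(\mathbf{u})\text{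 in }\mathbb{F}_{p^{n_i}}\text{ for }1\le i\le s\}.$$
   Context: The dual lattice of a full-rank lattice $\mathcal{L}\subseteq\mathbb{R}^m$ is $\mathcal{L}^*=\{\mathbf{u}\in\mathbb{R}^m:\langle\mathbf{u},\mathbf{x}\rangle\in\mathbb{Z}\ \forall\mathbf{x}\in\mathcal{L}\}$. Linear forms over $\mathbb{F}_p$ are evaluated at integer vectors by reduction mod $p$. *)

theory Defs
  imports "Berlekamp_Zassenhaus.Finite_Field" "Jordan_Normal_Form.Matrix"
    "HOL-Computational_Algebra.Polynomial"
begin

definition dual_lattice :: "nat \<Rightarrow> real vec set \<Rightarrow> real vec set" where
  "dual_lattice m L = {u \<in> carrier_vec m. \<forall>x\<in>L. u \<bullet> x \<in> \<int>}"

text \<open>Offset of block i in a partition ns: rows (i,j) of a matrix are row blk_off ns i + j.\<close>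
definition blk_off :: "nat list \<Rightarrow> nat \<Rightarrow> nat" where
  "blk_off ns i = sum_list (take i ns)"

definition lin_form :: "'a::comm_ring_1 mat \<Rightarrow> nat \<Rightarrow> int vec \<Rightarrow> 'a" where
  "lin_form A r x = (\<Sum>k<dim_vec x. A $$ (r, k) * of_int (x $ k))"

text \<open>lambda_i(x) = sum_j L_{i,j}(x) omega_i^(j-1), as an element of F_p[X] representing
  its class in F_p[X]/(f_i) = F_{p^{n_i}}, with omega_i the class of X.\<close>
definition lam :: "nat list \<Rightarrow> 'a::comm_ring_1 mat \<Rightarrow> nat \<Rightarrow> int vec \<Rightarrow> 'a poly" where
  "lam ns A i x = (\<Sum>j<ns ! i. monom (lin_form A (blk_off ns i + j) x) j)"

end

theory Submission
  imports Defs "Jordan_Normal_Form.Determinant"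
begin

text \<open>Reduced mod p, the condition that lambda_i(x) = z_i lambda'_i(y) in every block says
  A x = M_z A' y, where M_z is block diagonal and its i-th block is the matrix of multiplication
  by z_i on F_p[X]/(f_i). Hence L_z is the lattice of integer pairs (x, y) with x = T y mod p,
  where T = A^-1 M_z A'. Such a lattice contains p Z^2n, so p L_z^* is an integer lattice too:
  it consists of the (u, v) with u.x + v.y = 0 mod p on L_z, that is v = - T^t u mod p.
  Choosing w_i with z_i w_i = -1 mod f_i gives M_z M_w = -1, so this is the condition
  v = M_z (M_w T^t) u, which has the required shape with A'' = 1 and A''' = M_w T^t.\<close>

lemma invertible_mat_iff_det_nonzero:
  fixes A :: "'a::field mat"
  assumes A: "A \<in> carrier_mat n n"
  shows "invertible_mat A \<longleftrightarrow> det A \<noteq> 0"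
proof
  assume "invertible_mat A"
  then obtain B where AB: "A * B = 1\<^sub>m n" and BA: "B * A = 1\<^sub>m (dim_row B)"
    using A unfolding invertible_mat_def inverts_mat_def by auto
  from AB BA A have "B \<in> carrier_mat n n"
    by (metis carrier_matD carrier_matI index_mult_mat(2,3) index_one_mat(2,3))
  with A AB show "det A \<noteq> 0"
    using det_mult[of A n B] by auto
next
  assume "det A \<noteq> 0"
  from det_non_zero_imp_unit[OF A this, of "()"]
  obtain B where "B \<in> carrier_mat n n" "A * B = 1\<^sub>m n" "B * A = 1\<^sub>m n"
    unfolding Units_def ring_mat_def by auto
  with A show "invertible_mat A"
    unfolding invertible_mat_def inverts_mat_def by auto
qed

lemma invertible_mat_inverse:
  fixes A :: "'a::field mat"
  assumes "A \<in> carrier_mat n n" "invertible_mat A"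
  obtains B where "B \<in> carrier_mat n n" "invertible_mat B" "A * B = 1\<^sub>m n" "B * A = 1\<^sub>m n"
proof -
  from assms have "det A \<noteq> 0" by (simp add: invertible_mat_iff_det_nonzero)
  from det_non_zero_imp_unit[OF assms(1) this, of "()"] that assms(1) show ?thesis
    unfolding Units_def ring_mat_def invertible_mat_def inverts_mat_def by auto
qed

lemma invertible_mat_mult:
  fixes A B :: "'a::field mat"
  assumes "A \<in> carrier_mat n n" "invertible_mat A" "B \<in> carrier_mat n n" "invertible_mat B"
  shows "invertible_mat (A * B)"
  using assms by (simp add: invertible_mat_iff_det_nonzero[OF mult_carrier_mat[OF assms(1,3)]]
      invertible_mat_iff_det_nonzero det_mult[of A n B])

lemma invertible_mat_transpose:
  fixes A :: "'a::field mat"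
  assumes "A \<in> carrier_mat n n" "invertible_mat A"
  shows "invertible_mat (transpose_mat A)"
  using assms by (simp add: invertible_mat_iff_det_nonzero det_transpose)

lemma mult_mat_vec_eq_iff_inverse:
  fixes A B :: "'a::semiring_1 mat"
  assumes A: "A \<in> carrier_mat n n" and B: "B \<in> carrier_mat n n"
    and AB: "A * B = 1\<^sub>m n" and BA: "B * A = 1\<^sub>m n"
    and a: "a \<in> carrier_vec n" and b: "b \<in> carrier_vec n"
  shows "A *\<^sub>v a = b \<longleftrightarrow> a = B *\<^sub>v b"
proof
  assume "A *\<^sub>v a = b"
  then have "B *\<^sub>v b = (B * A) *\<^sub>v a" using A B a by (simp add: assoc_mult_mat_vec)
  with a BA show "a = B *\<^sub>v b" by simp
next
  assume "a = B *\<^sub>v b"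
  then have "A *\<^sub>v a = (A * B) *\<^sub>v b" using A B b by (simp add: assoc_mult_mat_vec)
  with b AB show "A *\<^sub>v a = b" by simp
qed

lemma of_int_scalar_prod:
  assumes "a \<in> carrier_vec n" "x \<in> carrier_vec n"
  shows "(of_int (a \<bullet> x) :: 'b::comm_ring_1) = map_vec of_int a \<bullet> map_vec of_int x"
  using assms by (simp add: scalar_prod_def of_int_sum)

lemma smult_append_vec: "a \<cdot>\<^sub>v (v @\<^sub>v w) = (a \<cdot>\<^sub>v v) @\<^sub>v (a \<cdot>\<^sub>v w)"
  by (rule eq_vecI) auto

lemma scalar_prod_all_zero_iff_eq_uminus:
  fixes a c :: "'a::comm_ring_1 vec"
  assumes a: "a \<in> carrier_vec n" and c: "c \<in> carrier_vec n"
  shows "(\<forall>b\<in>carrier_vec n. (a + c) \<bullet> b = 0) \<longleftrightarrow> c = - a"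
proof
  assume orth: "\<forall>b\<in>carrier_vec n. (a + c) \<bullet> b = 0"
  have "(a + c) $ k = 0" if k: "k < n" for k
  proof -
    have "(a + c) \<bullet> unit_vec n k = 0" using orth unit_vec_carrier by blast
    with k show ?thesis by simp
  qed
  with a c show "c = - a"
    by (intro eq_vecI) (auto simp: eq_neg_iff_add_eq_0 add.commute)
qed (use a in simp)

lemma scaled_dual_lattice_of_int:
  fixes S :: "int vec set"
  assumes q: "q > 0" and S: "S \<subseteq> carrier_vec m"
    and qS: "\<And>z. z \<in> carrier_vec m \<Longrightarrow> int q \<cdot>\<^sub>v z \<in> S"
  shows "(\<lambda>w. real q \<cdot>\<^sub>v w) ` dual_lattice m (map_vec real_of_int ` S)
    = map_vec real_of_int ` {g \<in> carrier_vec m. \<forall>z\<in>S. int q dvd g \<bullet> z}"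
proof (intro equalityI subsetI)
  fix gr assume "gr \<in> (\<lambda>w. real q \<cdot>\<^sub>v w) ` dual_lattice m (map_vec real_of_int ` S)"
  then obtain w where gr: "gr = real q \<cdot>\<^sub>v w" and w: "w \<in> carrier_vec m"
    and dual: "\<And>z. z \<in> S \<Longrightarrow> w \<bullet> map_vec real_of_int z \<in> \<int>"
    unfolding dual_lattice_def by blast
  have "real q * w $ k \<in> \<int>" if k: "k < m" for k
  proof -
    have "map_vec real_of_int (int q \<cdot>\<^sub>v unit_vec m k) = real q \<cdot>\<^sub>v unit_vec m k"
      by (rule eq_vecI) (auto simp: unit_vec_def)
    with dual[OF qS[OF unit_vec_carrier[of m k]]] k w show ?thesis by simp
  qed
  then have "\<forall>k<m. real q * w $ k = real_of_int \<lfloor>real q * w $ k\<rfloor>" by simp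
  then obtain g where g: "g \<in> carrier_vec m" and gg: "map_vec real_of_int g = gr"
    using w gr by (intro that[of "vec m (\<lambda>k. \<lfloor>real q * w $ k\<rfloor>)"]) auto
  have "int q dvd g \<bullet> z" if z: "z \<in> S" for z
  proof -
    from dual[OF z] obtain s where s: "w \<bullet> map_vec real_of_int z = of_int s" by (elim Ints_cases)
    have zm: "z \<in> carrier_vec m" using S z by blast
    have "real_of_int (g \<bullet> z) = map_vec real_of_int g \<bullet> map_vec real_of_int z"
      by (rule of_int_scalar_prod[OF g zm])
    also have "\<dots> = real q * (w \<bullet> map_vec real_of_int z)"
      using gg gr w zm by simp
    also have "\<dots> = real_of_int (int q * s)" using s by simp
    finally show ?thesis by (simp only: of_int_eq_iff) simp
  qed
  with g gg show "gr \<in> map_vec real_of_int ` {g \<in> carrier_vec m. \<forall>z\<in>S. int q dvd g \<bullet> z}"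
    by blast
next
  fix gr assume "gr \<in> map_vec real_of_int ` {g \<in> carrier_vec m. \<forall>z\<in>S. int q dvd g \<bullet> z}"
  then obtain g where gr: "gr = map_vec real_of_int g" and g: "g \<in> carrier_vec m"
    and dvd: "\<And>z. z \<in> S \<Longrightarrow> int q dvd g \<bullet> z" by blast
  define w where "w = (1 / real q) \<cdot>\<^sub>v gr"
  have "w \<bullet> map_vec real_of_int z \<in> \<int>" if z: "z \<in> S" for z
  proof -
    from dvd[OF z] obtain s where s: "g \<bullet> z = int q * s" by (elim dvdE)
    have zm: "z \<in> carrier_vec m" using S z by blast
    have "w \<bullet> map_vec real_of_int z = real_of_int (g \<bullet> z) / real q"
      using of_int_scalar_prod[OF g zm, where 'b = real] g zm unfolding w_def gr by simp
    also have "\<dots> = of_int s" using s q by simp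
    finally show ?thesis by simp
  qed
  moreover have "gr = real q \<cdot>\<^sub>v w" unfolding w_def using q by (intro eq_vecI) auto
  ultimately show "gr \<in> (\<lambda>w. real q \<cdot>\<^sub>v w) ` dual_lattice m (map_vec real_of_int ` S)"
    using g unfolding dual_lattice_def w_def gr by auto
qed

definition mod_graph_lattice :: "nat \<Rightarrow> 'a::comm_ring_1 mat \<Rightarrow> int vec set" where
  "mod_graph_lattice n T = {x @\<^sub>v y | x y. x \<in> carrier_vec n \<and> y \<in> carrier_vec n
     \<and> map_vec of_int x = T *\<^sub>v map_vec of_int y}"

lemma ex_lift_mod_ring_vec: "\<exists>y \<in> carrier_vec n. map_vec of_int y = (b :: 'p::nontriv mod_ring vec)"
  if "b \<in> carrier_vec n"
  using that by (intro bexI[of _ "map_vec to_int_mod_ring b"] eq_vecI)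
    (auto simp: of_int_of_int_mod_ring)

lemma of_int_append_scalar_prod_graph:
  fixes T :: "'a::comm_ring_1 mat"
  assumes T: "T \<in> carrier_mat n n" and u: "u \<in> carrier_vec n" and v: "v \<in> carrier_vec n"
    and x: "x \<in> carrier_vec n" and y: "y \<in> carrier_vec n"
    and xy: "map_vec of_int x = T *\<^sub>v map_vec of_int y"
  shows "(of_int ((u @\<^sub>v v) \<bullet> (x @\<^sub>v y)) :: 'a)
    = (transpose_mat T *\<^sub>v map_vec of_int u + map_vec of_int v) \<bullet> map_vec of_int y"
proof -
  have "(of_int ((u @\<^sub>v v) \<bullet> (x @\<^sub>v y)) :: 'a)
      = map_vec of_int u \<bullet> map_vec of_int x + map_vec of_int v \<bullet> map_vec of_int y"
    using u v x y by (simp add: scalar_prod_append of_int_scalar_prod)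
  also have "map_vec of_int u \<bullet> map_vec of_int x
      = (transpose_mat T *\<^sub>v map_vec of_int u) \<bullet> (map_vec of_int y :: 'a vec)"
    unfolding xy using T u y by (simp add: transpose_vec_mult_scalar)
  finally show ?thesis
    using T u v y by (simp add: add_scalar_prod_distrib[of _ n])
qed

lemma mod_graph_lattice_orthogonal_iff:
  fixes T :: "'p::nontriv mod_ring mat"
  assumes T: "T \<in> carrier_mat n n" and u: "u \<in> carrier_vec n" and v: "v \<in> carrier_vec n"
  shows "(\<forall>z\<in>mod_graph_lattice n T. int CARD('p) dvd (u @\<^sub>v v) \<bullet> z)
    \<longleftrightarrow> map_vec of_int v = - (transpose_mat T *\<^sub>v map_vec of_int u)"
proof -
  let ?r = "map_vec (of_int :: int \<Rightarrow> 'p mod_ring)"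
  let ?d = "transpose_mat T *\<^sub>v ?r u + ?r v"
  note reduce = of_int_append_scalar_prod_graph[OF T u v]
  have "(\<forall>z\<in>mod_graph_lattice n T. int CARD('p) dvd (u @\<^sub>v v) \<bullet> z)
      \<longleftrightarrow> (\<forall>b\<in>carrier_vec n. ?d \<bullet> b = 0)"
  proof
    assume orth: "\<forall>z\<in>mod_graph_lattice n T. int CARD('p) dvd (u @\<^sub>v v) \<bullet> z"
    show "\<forall>b\<in>carrier_vec n. ?d \<bullet> b = 0"
    proof
      fix b :: "'p mod_ring vec" assume b: "b \<in> carrier_vec n"
      obtain y where y: "y \<in> carrier_vec n" "?r y = b" using ex_lift_mod_ring_vec[OF b] by blast
      obtain x where x: "x \<in> carrier_vec n" "?r x = T *\<^sub>v b"
        using ex_lift_mod_ring_vec[of "T *\<^sub>v b" n] T b by auto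
      have "x @\<^sub>v y \<in> mod_graph_lattice n T" using x y unfolding mod_graph_lattice_def by blast
      with orth have "(of_int ((u @\<^sub>v v) \<bullet> (x @\<^sub>v y)) :: 'p mod_ring) = 0"
        by (simp add: of_int_eq_0_iff_char_dvd)
      with reduce[OF x(1) y(1)] x y show "?d \<bullet> b = 0" by simp
    qed
  next
    assume "\<forall>b\<in>carrier_vec n. ?d \<bullet> b = 0"
    then show "\<forall>z\<in>mod_graph_lattice n T. int CARD('p) dvd (u @\<^sub>v v) \<bullet> z"
      unfolding mod_graph_lattice_def
      by (auto simp: reduce simp flip: of_int_eq_0_iff_char_dvd semiring_char_mod_ring)
  qed
  also have "\<dots> \<longleftrightarrow> ?r v = - (transpose_mat T *\<^sub>v ?r u)"
    using T u v by (intro scalar_prod_all_zero_iff_eq_uminus) simp_all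
  finally show ?thesis .
qed

lemma smult_CARD_mem_mod_graph_lattice:
  fixes T :: "'p::nontriv mod_ring mat"
  assumes T: "T \<in> carrier_mat n n" and z: "z \<in> carrier_vec (2 * n)"
  shows "int CARD('p) \<cdot>\<^sub>v z \<in> mod_graph_lattice n T"
proof -
  let ?x = "int CARD('p) \<cdot>\<^sub>v vec_first z n" and ?y = "int CARD('p) \<cdot>\<^sub>v vec_last z n"
  have "int CARD('p) \<cdot>\<^sub>v z = int CARD('p) \<cdot>\<^sub>v (vec_first z n @\<^sub>v vec_last z n)"
    using z by (simp add: mult_2)
  also have "\<dots> = ?x @\<^sub>v ?y" by (rule smult_append_vec)
  finally have "int CARD('p) \<cdot>\<^sub>v z = ?x @\<^sub>v ?y" .

  moreover have "map_vec of_int ?x = T *\<^sub>v map_vec (of_int :: int \<Rightarrow> 'p mod_ring) ?y"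
    using T by (intro eq_vecI) (auto simp: scalar_prod_def)
  ultimately show ?thesis unfolding mod_graph_lattice_def by fastforce
qed

lemma mod_graph_lattice_orthogonal_eq:
  fixes T :: "'p::nontriv mod_ring mat"
  assumes T: "T \<in> carrier_mat n n"
  shows "{g \<in> carrier_vec (2 * n). \<forall>z\<in>mod_graph_lattice n T. int CARD('p) dvd g \<bullet> z} =
      {u @\<^sub>v v | u v. u \<in> carrier_vec n \<and> v \<in> carrier_vec n
        \<and> map_vec of_int v = - (transpose_mat T *\<^sub>v map_vec of_int u)}"
proof (intro equalityI subsetI)
  fix g assume "g \<in> {g \<in> carrier_vec (2 * n). \<forall>z\<in>mod_graph_lattice n T. int CARD('p) dvd g \<bullet> z}"
  then have g: "g = vec_first g n @\<^sub>v vec_last g n"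
    and orth: "\<forall>z\<in>mod_graph_lattice n T. int CARD('p) dvd g \<bullet> z" by (auto simp: mult_2)
  from orth have "map_vec of_int (vec_last g n)
      = - (transpose_mat T *\<^sub>v map_vec (of_int :: int \<Rightarrow> 'p mod_ring) (vec_first g n))"
    by (subst (asm) g, subst (asm) mod_graph_lattice_orthogonal_iff[OF T]) simp_all
  with g show "g \<in> {u @\<^sub>v v | u v. u \<in> carrier_vec n \<and> v \<in> carrier_vec n
      \<and> map_vec of_int v = - (transpose_mat T *\<^sub>v map_vec of_int u)}"
    by (intro CollectI exI[of _ "vec_first g n"] exI[of _ "vec_last g n"]) simp
qed (use mod_graph_lattice_orthogonal_iff[OF T] in \<open>auto simp: mult_2\<close>)

theorem scaled_dual_mod_graph_lattice:
  fixes T :: "'p::nontriv mod_ring mat"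
  assumes T: "T \<in> carrier_mat n n"
  shows "(\<lambda>w. real CARD('p) \<cdot>\<^sub>v w) ` dual_lattice (2 * n) (map_vec real_of_int ` mod_graph_lattice n T)
    = map_vec real_of_int ` {u @\<^sub>v v | u v. u \<in> carrier_vec n \<and> v \<in> carrier_vec n
        \<and> map_vec of_int v = - (transpose_mat T *\<^sub>v map_vec of_int u)}"
proof -
  have "mod_graph_lattice n T \<subseteq> carrier_vec (2 * n)"
    unfolding mod_graph_lattice_def by (auto simp: mult_2)
  then show ?thesis
    using scaled_dual_lattice_of_int[of "CARD('p)" "mod_graph_lattice n T" "2 * n"]
      smult_CARD_mem_mod_graph_lattice[OF T] mod_graph_lattice_orthogonal_eq[OF T] by simp
qed

lemma coprime_imp_ex_solution_mod:
  fixes a b :: "'a::euclidean_ring_gcd"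
  assumes "coprime a b"
  shows "\<exists>v. a dvd b * v - c"
proof -
  obtain s t where st: "s * a + t * b = 1"
    using assms bezout_coefficients_fst_snd[of a b] by auto
  have "b * (t * c) - c = - (s * c * a)" by (subst (2) mult_1[symmetric], subst st[symmetric]) (simp add: algebra_simps)
  then show ?thesis by (metis dvd_minus_iff dvd_triv_right)
qed

lemma blk_off_Suc: "i < length ns \<Longrightarrow> blk_off ns (Suc i) = blk_off ns i + ns ! i"
  by (simp add: blk_off_def take_Suc_conv_app_nth)

lemma blk_off_mono: "i \<le> i' \<Longrightarrow> blk_off ns i \<le> blk_off ns i'"
  by (metis blk_off_def le_Suc_ex le_add1 sum_list_append take_add)

lemma blk_off_Cons_Suc: "blk_off (a # ns) (Suc i) = a + blk_off ns i"
  by (simp add: blk_off_def)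

lemma blk_off_add_le_sum_list: "i < length ns \<Longrightarrow> blk_off ns i + ns ! i \<le> sum_list ns"
  by (metis blk_off_Suc blk_off_def blk_off_mono Suc_leI take_all_iff order.refl)

lemma blk_index_unique:
  assumes "i < length ns" "i' < length ns" "j < ns ! i"
    and "blk_off ns i' \<le> blk_off ns i + j" "blk_off ns i + j < blk_off ns i' + ns ! i'"
  shows "i' = i"
proof (rule ccontr)
  assume "i' \<noteq> i"
  then consider "Suc i \<le> i'" | "Suc i' \<le> i" by linarith
  then show False
  proof cases
    case 1
    then have "blk_off ns (Suc i) \<le> blk_off ns i'" by (rule blk_off_mono)
    with assms show False by (simp add: blk_off_Suc)
  next
    case 2
    then have "blk_off ns (Suc i') \<le> blk_off ns i" by (rule blk_off_mono)
    with assms show False by (simp add: blk_off_Suc)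
  qed
qed

lemma ex_blk_index: "k < sum_list ns \<Longrightarrow> \<exists>i<length ns. \<exists>j<ns ! i. k = blk_off ns i + j"
proof (induction ns arbitrary: k)
  case (Cons a ns)
  show ?case
  proof (cases "k < a")
    case True
    then show ?thesis by (intro exI[of _ 0]) (auto simp: blk_off_def)
  next
    case False
    with Cons obtain i j where "i < length ns" "j < ns ! i" "k - a = blk_off ns i + j"
      by (metis add_diff_inverse_nat add_less_imp_less_left sum_list.Cons)
    with False show ?thesis by (intro exI[of _ "Suc i"]) (auto simp: blk_off_Cons_Suc)
  qed
qed simp

definition blk_poly :: "nat list \<Rightarrow> nat \<Rightarrow> 'a::comm_ring_1 vec \<Rightarrow> 'a poly" where
  "blk_poly ns i c = (\<Sum>j<ns ! i. monom (c $ (blk_off ns i + j)) j)"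

lemma coeff_blk_poly:
  "coeff (blk_poly ns i c) t = (if t < ns ! i then c $ (blk_off ns i + t) else 0)"
  by (simp add: blk_poly_def coeff_sum coeff_monom)

lemma blk_poly_smult:
  assumes "i < length ns" "c \<in> carrier_vec (sum_list ns)"
  shows "blk_poly ns i (k \<cdot>\<^sub>v c) = smult k (blk_poly ns i c)"
  by (rule poly_eqI) (use assms blk_off_add_le_sum_list[of i ns] in \<open>auto simp: coeff_blk_poly\<close>)

lemma lam_eq_blk_poly:
  assumes "A \<in> carrier_mat (sum_list ns) (sum_list ns)" "x \<in> carrier_vec (sum_list ns)"
    and "i < length ns"
  shows "lam ns A i x = blk_poly ns i (A *\<^sub>v map_vec of_int x)"
  unfolding lam_def blk_poly_def
proof (rule sum.cong)
  fix j assume "j \<in> {..<ns ! i}"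
  then have "blk_off ns i + j < sum_list ns"
    using blk_off_add_le_sum_list[OF assms(3)] by simp
  with assms show "monom (lin_form A (blk_off ns i + j) x) j
    = monom ((A *\<^sub>v map_vec of_int x) $ (blk_off ns i + j)) j"
    by (simp add: lin_form_def mult_mat_vec_def scalar_prod_def atLeast0LessThan)
qed simp

text \<open>Block diagonal; its i-th block is the matrix of multiplication by w i on
  F[X]/(fs ! i) with respect to the basis 1, X, ..., X^(ns ! i - 1).\<close>
definition blk_mult_mat :: "nat list \<Rightarrow> 'a::field poly list \<Rightarrow> (nat \<Rightarrow> 'a poly) \<Rightarrow> 'a mat" where
  "blk_mult_mat ns fs w = mat (sum_list ns) (sum_list ns) (\<lambda>(r, k). \<Sum>i<length ns.
     if blk_off ns i \<le> r \<and> r < blk_off ns i + ns ! i \<and> blk_off ns i \<le> k \<and> k < blk_off ns i + ns ! i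
     then coeff ((w i * monom 1 (k - blk_off ns i)) mod fs ! i) (r - blk_off ns i) else 0)"

lemma dim_blk_mult_mat [simp]:
  "dim_row (blk_mult_mat ns fs w) = sum_list ns" "dim_col (blk_mult_mat ns fs w) = sum_list ns"
  by (simp_all add: blk_mult_mat_def)

lemma blk_mult_mat_carrier [simp]: "blk_mult_mat ns fs w \<in> carrier_mat (sum_list ns) (sum_list ns)"
  by (simp add: carrier_matI)

lemma blk_mult_mat_mult_vec_carrier [simp]:
  "blk_mult_mat ns fs w *\<^sub>v c \<in> carrier_vec (sum_list ns)"
  by (simp add: carrier_vecI)

lemma blk_mult_mat_entry:
  assumes i: "i < length ns" and j: "j < ns ! i" and k: "k < sum_list ns"
  shows "blk_mult_mat ns fs w $$ (blk_off ns i + j, k) =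
    (if blk_off ns i \<le> k \<and> k < blk_off ns i + ns ! i
     then coeff ((w i * monom 1 (k - blk_off ns i)) mod fs ! i) j else 0)"
proof -
  let ?o = "blk_off ns i"
  let ?e = "\<lambda>i'. if blk_off ns i' \<le> ?o + j \<and> ?o + j < blk_off ns i' + ns ! i'
     \<and> blk_off ns i' \<le> k \<and> k < blk_off ns i' + ns ! i'
     then coeff ((w i' * monom 1 (k - blk_off ns i')) mod fs ! i') (?o + j - blk_off ns i') else 0"
  have "?o + j < sum_list ns" using blk_off_add_le_sum_list[OF i] j by simp
  with k have "blk_mult_mat ns fs w $$ (?o + j, k) = (\<Sum>i'<length ns. ?e i')"
    by (simp add: blk_mult_mat_def)
  also have "\<dots> = (\<Sum>i'\<in>{i}. ?e i')"
    by (rule sum.mono_neutral_right) (use i j blk_index_unique[OF i _ j] in auto)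
  finally show ?thesis using j by simp
qed

lemma blk_mult_mat_mult_vec_index:
  assumes i: "i < length ns" and j: "j < ns ! i" and c: "c \<in> carrier_vec (sum_list ns)"
  shows "(blk_mult_mat ns fs w *\<^sub>v c) $ (blk_off ns i + j) =
    (\<Sum>j'<ns ! i. coeff ((w i * monom 1 j') mod fs ! i) j * c $ (blk_off ns i + j'))"
proof -
  let ?o = "blk_off ns i"
  let ?g = "\<lambda>k. coeff ((w i * monom 1 (k - ?o)) mod fs ! i) j * c $ k"
  have blk: "{?o..<?o + ns ! i} \<subseteq> {0..<sum_list ns}" using blk_off_add_le_sum_list[OF i] by auto
  have "?o + j < sum_list ns" using blk_off_add_le_sum_list[OF i] j by simp
  with c have "(blk_mult_mat ns fs w *\<^sub>v c) $ (?o + j)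
      = (\<Sum>k\<in>{0..<sum_list ns}. blk_mult_mat ns fs w $$ (?o + j, k) * c $ k)"
    by (simp add: mult_mat_vec_def scalar_prod_def row_def)
  also have "\<dots> = (\<Sum>k\<in>{0..<sum_list ns}. if k \<in> {?o..<?o + ns ! i} then ?g k else 0)"
    by (rule sum.cong) (simp_all add: blk_mult_mat_entry[OF i j])
  also have "\<dots> = (\<Sum>k\<in>{?o..<?o + ns ! i}. ?g k)"
    by (rule sum.mono_neutral_cong_right) (use blk in auto)
  also have "\<dots> = (\<Sum>j'<ns ! i. ?g (?o + j'))"
    by (rule sum.reindex_bij_witness[of _ "\<lambda>j'. ?o + j'" "\<lambda>k. k - ?o"]) auto
  finally show ?thesis by simp
qed

locale block_moduli =
  fixes ns :: "nat list" and fs :: "'a::field poly list"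
  assumes moduli_nonzero: "i < length ns \<Longrightarrow> fs ! i \<noteq> 0"
    and degree_moduli: "i < length ns \<Longrightarrow> degree (fs ! i) = ns ! i"
begin

lemma blk_poly_eq_if_dvd:
  assumes a: "a \<in> carrier_vec (sum_list ns)" and b: "b \<in> carrier_vec (sum_list ns)"
    and dvd: "\<forall>i<length ns. fs ! i dvd blk_poly ns i a - blk_poly ns i b"
  shows "a = b"
proof (rule eq_vecI)
  fix k assume "k < dim_vec b"
  with b obtain i j where i: "i < length ns" and j: "j < ns ! i" and k: "k = blk_off ns i + j"
    using ex_blk_index by (metis carrier_vecD)
  define d where "d = blk_poly ns i a - blk_poly ns i b"
  have high: "coeff d t = 0" if "ns ! i \<le> t" for t
    using that by (simp add: d_def coeff_blk_poly)
  have "d = 0"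
  proof (rule ccontr)
    assume "d \<noteq> 0"
    then have "ns ! i \<le> degree d"
      using dvd_imp_degree_le[of "fs ! i" d] dvd i degree_moduli by (simp add: d_def)
    with high[of "degree d"] \<open>d \<noteq> 0\<close> show False by simp
  qed
  then have "coeff d j = 0" by simp
  with j k show "a $ k = b $ k" by (simp add: d_def coeff_blk_poly)
qed (use a b in simp)

lemma blk_poly_blk_mult_mat_cong:
  assumes i: "i < length ns" and c: "c \<in> carrier_vec (sum_list ns)"
  shows "fs ! i dvd blk_poly ns i (blk_mult_mat ns fs w *\<^sub>v c) - w i * blk_poly ns i c"
proof -
  let ?o = "blk_off ns i" and ?f = "fs ! i"
  define h where "h j' = w i * monom 1 j'" for j'
  have high: "coeff (h j' mod ?f) t = 0" if "ns ! i \<le> t" for t j'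
  proof (cases "h j' mod ?f = 0")
    case False
    then have "degree (h j' mod ?f) < ns ! i"
      using degree_mod_less'[OF moduli_nonzero[OF i] False] degree_moduli[OF i] by simp
    with that show ?thesis by (intro coeff_eq_0) simp
  qed simp
  have "blk_poly ns i (blk_mult_mat ns fs w *\<^sub>v c) = (\<Sum>j'<ns ! i. smult (c $ (?o + j')) (h j' mod ?f))"
    by (rule poly_eqI) (auto simp: coeff_blk_poly coeff_sum high[unfolded h_def]
        blk_mult_mat_mult_vec_index[OF i _ c] h_def mult.commute)
  moreover have "w i * blk_poly ns i c = (\<Sum>j'<ns ! i. smult (c $ (?o + j')) (h j'))"
    unfolding blk_poly_def h_def sum_distrib_left
    by (rule sum.cong) (simp_all add: smult_monom flip: mult_smult_right)
  ultimately have "blk_poly ns i (blk_mult_mat ns fs w *\<^sub>v c) - w i * blk_poly ns i c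
      = (\<Sum>j'<ns ! i. smult (c $ (?o + j')) (h j' mod ?f - h j'))"
    by (simp add: sum_subtractf smult_diff_right)
  also have "?f dvd \<dots>"
    by (intro dvd_sum dvd_smult) (metis mod_mod_trivial mod_eq_dvd_iff)
  finally show ?thesis .
qed

lemma blk_mult_mat_eq_iff:
  assumes a: "a \<in> carrier_vec (sum_list ns)" and b: "b \<in> carrier_vec (sum_list ns)"
  shows "a = blk_mult_mat ns fs w *\<^sub>v b \<longleftrightarrow>
    (\<forall>i<length ns. fs ! i dvd blk_poly ns i a - w i * blk_poly ns i b)"
proof
  assume dvd: "\<forall>i<length ns. fs ! i dvd blk_poly ns i a - w i * blk_poly ns i b"
  have "fs ! i dvd blk_poly ns i a - blk_poly ns i (blk_mult_mat ns fs w *\<^sub>v b)"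
    if i: "i < length ns" for i
    using dvd_diff[OF dvd[rule_format, OF i] blk_poly_blk_mult_mat_cong[OF i b, of w]] by simp
  with a show "a = blk_mult_mat ns fs w *\<^sub>v b"
    by (intro blk_poly_eq_if_dvd) simp_all
qed (use blk_poly_blk_mult_mat_cong[OF _ b] in simp)

lemma blk_mult_mat_mult_vec_compose:
  assumes c: "c \<in> carrier_vec (sum_list ns)"
    and vwu: "\<forall>i<length ns. fs ! i dvd v i * w i - u i"
  shows "blk_mult_mat ns fs v *\<^sub>v (blk_mult_mat ns fs w *\<^sub>v c) = blk_mult_mat ns fs u *\<^sub>v c"
proof -
  let ?P = "blk_poly ns" and ?d = "blk_mult_mat ns fs w *\<^sub>v c"
  have "fs ! i dvd ?P i (blk_mult_mat ns fs v *\<^sub>v ?d) - u i * ?P i c" if i: "i < length ns" for i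
  proof -
    have "?P i (blk_mult_mat ns fs v *\<^sub>v ?d) - u i * ?P i c
      = (?P i (blk_mult_mat ns fs v *\<^sub>v ?d) - v i * ?P i ?d)
        + v i * (?P i ?d - w i * ?P i c) + (v i * w i - u i) * ?P i c"
      by (simp add: algebra_simps)
    with i vwu show ?thesis
      by (metis blk_poly_blk_mult_mat_cong blk_mult_mat_mult_vec_carrier c dvd_add dvd_mult dvd_mult2)
  qed
  with c show ?thesis by (subst blk_mult_mat_eq_iff) simp_all
qed

lemma blk_mult_mat_const:
  assumes "c \<in> carrier_vec (sum_list ns)"
  shows "blk_mult_mat ns fs (\<lambda>_. [:k:]) *\<^sub>v c = k \<cdot>\<^sub>v c"
  using assms by (subst eq_commute, subst blk_mult_mat_eq_iff) (simp_all add: blk_poly_smult)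

lemma invertible_blk_mult_mat:
  assumes "\<forall>i<length ns. \<exists>v. fs ! i dvd w i * v - 1"
  shows "invertible_mat (blk_mult_mat ns fs w)"
proof -
  from assms obtain v where v: "\<forall>i<length ns. fs ! i dvd v i * w i - [:1:]"
    by (metis mult.commute one_pCons)
  let ?M = "blk_mult_mat ns fs"
  have "c = 0\<^sub>v (sum_list ns)"
    if c: "c \<in> carrier_vec (sum_list ns)" and "?M w *\<^sub>v c = 0\<^sub>v (sum_list ns)" for c
  proof -
    have "c = ?M (\<lambda>_. [:1:]) *\<^sub>v c" using blk_mult_mat_const[OF c, of 1] c by simp
    also have "\<dots> = ?M v *\<^sub>v (?M w *\<^sub>v c)" using blk_mult_mat_mult_vec_compose[OF c v] by simp
    also have "\<dots> = 0\<^sub>v (sum_list ns)" using that by (intro eq_vecI) auto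
    finally show ?thesis .
  qed
  then show ?thesis
    by (auto simp: invertible_mat_iff_det_nonzero[OF blk_mult_mat_carrier]
        det_0_iff_vec_prod_zero_field[OF blk_mult_mat_carrier])
qed

lemma lam_dvd_iff:
  assumes A: "A \<in> carrier_mat (sum_list ns) (sum_list ns)" and B: "B \<in> carrier_mat (sum_list ns) (sum_list ns)"
    and x: "x \<in> carrier_vec (sum_list ns)" and y: "y \<in> carrier_vec (sum_list ns)"
  shows "(\<forall>i<length ns. fs ! i dvd lam ns A i x - w i * lam ns B i y) \<longleftrightarrow>
    A *\<^sub>v map_vec of_int x = blk_mult_mat ns fs w *\<^sub>v (B *\<^sub>v map_vec of_int y)"
  using A B x y by (subst blk_mult_mat_eq_iff) (simp_all add: lam_eq_blk_poly)

lemma lam_lattice_eq_mod_graph_lattice: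
  assumes A: "A \<in> carrier_mat (sum_list ns) (sum_list ns)" and A': "A' \<in> carrier_mat (sum_list ns) (sum_list ns)"
    and Ai: "Ai \<in> carrier_mat (sum_list ns) (sum_list ns)"
      "A * Ai = 1\<^sub>m (sum_list ns)" "Ai * A = 1\<^sub>m (sum_list ns)"
  shows "{map_vec real_of_int (x @\<^sub>v y) | x y. x \<in> carrier_vec (sum_list ns) \<and> y \<in> carrier_vec (sum_list ns)
      \<and> (\<forall>i<length ns. fs ! i dvd (lam ns A i x - z i * lam ns A' i y))}
    = map_vec real_of_int ` mod_graph_lattice (sum_list ns) (Ai * blk_mult_mat ns fs z * A')"
proof -
  let ?r = "map_vec (of_int :: int \<Rightarrow> 'a)" and ?Mz = "blk_mult_mat ns fs z"
  have "(\<forall>i<length ns. fs ! i dvd lam ns A i x - z i * lam ns A' i y)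
      \<longleftrightarrow> ?r x = (Ai * ?Mz * A') *\<^sub>v ?r y"
    if x: "x \<in> carrier_vec (sum_list ns)" and y: "y \<in> carrier_vec (sum_list ns)" for x y
  proof -
    have "(\<forall>i<length ns. fs ! i dvd lam ns A i x - z i * lam ns A' i y)
        \<longleftrightarrow> A *\<^sub>v ?r x = ?Mz *\<^sub>v (A' *\<^sub>v ?r y)"
      using A A' x y by (rule lam_dvd_iff)
    also have "\<dots> \<longleftrightarrow> ?r x = Ai *\<^sub>v (?Mz *\<^sub>v (A' *\<^sub>v ?r y))"
      using A A' Ai x y by (intro mult_mat_vec_eq_iff_inverse[of _ "sum_list ns"]) simp_all
    also have "Ai *\<^sub>v (?Mz *\<^sub>v (A' *\<^sub>v ?r y)) = (Ai * ?Mz * A') *\<^sub>v ?r y"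
      using A' Ai y by (simp add: assoc_mult_mat_vec[of _ "sum_list ns" "sum_list ns" _ "sum_list ns"])
    finally show ?thesis .
  qed
  then show ?thesis unfolding mod_graph_lattice_def by blast
qed

lemma lam_lattice_eq_neg_transpose_graph:
  assumes T: "T \<in> carrier_mat (sum_list ns) (sum_list ns)"
    and zw: "\<forall>i<length ns. fs ! i dvd z i * w i - [:-1:]"
  shows "{map_vec real_of_int (u @\<^sub>v v) | u v. u \<in> carrier_vec (sum_list ns) \<and> v \<in> carrier_vec (sum_list ns)
      \<and> (\<forall>i<length ns. fs ! i dvd (lam ns (1\<^sub>m (sum_list ns)) i v
            - z i * lam ns (blk_mult_mat ns fs w * transpose_mat T) i u))}
    = map_vec real_of_int ` {u @\<^sub>v v | u v. u \<in> carrier_vec (sum_list ns) \<and> v \<in> carrier_vec (sum_list ns)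
      \<and> map_vec of_int v = - (transpose_mat T *\<^sub>v map_vec of_int u)}"
proof -
  let ?r = "map_vec (of_int :: int \<Rightarrow> 'a)" and ?M = "blk_mult_mat ns fs"
  have "(\<forall>i<length ns. fs ! i dvd lam ns (1\<^sub>m (sum_list ns)) i v
        - z i * lam ns (?M w * transpose_mat T) i u)
      \<longleftrightarrow> ?r v = - (transpose_mat T *\<^sub>v ?r u)"
    if u: "u \<in> carrier_vec (sum_list ns)" and v: "v \<in> carrier_vec (sum_list ns)" for u v
  proof -
    have Tu: "transpose_mat T *\<^sub>v ?r u \<in> carrier_vec (sum_list ns)" using T u by simp
    have "(\<forall>i<length ns. fs ! i dvd lam ns (1\<^sub>m (sum_list ns)) i v
          - z i * lam ns (?M w * transpose_mat T) i u)
        \<longleftrightarrow> 1\<^sub>m (sum_list ns) *\<^sub>v ?r v = ?M z *\<^sub>v ((?M w * transpose_mat T) *\<^sub>v ?r u)"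
      using T u v by (intro lam_dvd_iff mult_carrier_mat[of _ _ "sum_list ns"]) simp_all
    also have "?M z *\<^sub>v ((?M w * transpose_mat T) *\<^sub>v ?r u)
        = ?M z *\<^sub>v (?M w *\<^sub>v (transpose_mat T *\<^sub>v ?r u))"
      using T u by (simp add: assoc_mult_mat_vec[of _ "sum_list ns" "sum_list ns"])
    also have "\<dots> = ?M (\<lambda>_. [:-1:]) *\<^sub>v (transpose_mat T *\<^sub>v ?r u)"
      using blk_mult_mat_mult_vec_compose[OF Tu zw] .
    also have "\<dots> = - (transpose_mat T *\<^sub>v ?r u)"
      using blk_mult_mat_const[OF Tu] Tu by (intro eq_vecI) auto
    finally show ?thesis using v by simp
  qed
  then show ?thesis by blast
qed

end

theorem proposition5p2:
  fixes n :: nat and ns :: "nat list"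
    and fs zs :: "'p::prime_card mod_ring poly list"
    and A A' :: "'p mod_ring mat"
  assumes "n \<ge> 1"
    and "\<forall>i<length ns. ns ! i > 0" and "sum_list ns = n"
    and "length fs = length ns" and "length zs = length ns"
    and "\<forall>i<length ns. irreducible (fs ! i) \<and> degree (fs ! i) = ns ! i"
    and "\<forall>i<length ns. \<not> (fs ! i) dvd (zs ! i)"
    and "A \<in> carrier_mat n n" and "invertible_mat A"
    and "A' \<in> carrier_mat n n" and "invertible_mat A'"
  shows "\<exists>A'' A'''. A'' \<in> carrier_mat n n \<and> invertible_mat A'' \<and>
           A''' \<in> carrier_mat n n \<and> invertible_mat A''' \<and>
           (\<lambda>w. real CARD('p) \<cdot>\<^sub>v w) `
             dual_lattice (2 * n)
               {map_vec real_of_int (x @\<^sub>v y) | x y.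
                  x \<in> carrier_vec n \<and> y \<in> carrier_vec n \<and>
                  (\<forall>i<length ns. fs ! i dvd (lam ns A i x - zs ! i * lam ns A' i y))}
           = {map_vec real_of_int (u @\<^sub>v v) | u v.
                  u \<in> carrier_vec n \<and> v \<in> carrier_vec n \<and>
                  (\<forall>i<length ns. fs ! i dvd (lam ns A'' i v - zs ! i * lam ns A''' i u))}"
proof -
  note n = \<open>sum_list ns = n\<close>
  interpret block_moduli ns fs
    using assms(6) by unfold_locales auto
  let ?M = "blk_mult_mat ns fs"
  have coprime: "coprime (fs ! i) (zs ! i)" if "i < length ns" for i
    using that assms(6,7) by (simp add: prime_elem_imp_coprime prime_elem_iff_irreducible)
  then have "invertible_mat (?M ((!) zs))"
    using coprime_imp_ex_solution_mod by (intro invertible_blk_mult_mat) blast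
  have "\<forall>i<length ns. \<exists>v. fs ! i dvd zs ! i * v - [:-1:]"
    using coprime coprime_imp_ex_solution_mod by blast
  then obtain w where zw: "\<forall>i<length ns. fs ! i dvd zs ! i * w i - [:-1:]" by metis
  have "w i * - zs ! i - 1 = - (zs ! i * w i - [:-1:])" for i
    by (simp add: algebra_simps one_pCons)
  with zw have "invertible_mat (?M w)"
    by (intro invertible_blk_mult_mat) (metis dvd_minus_iff)
  obtain Ai where Ai: "Ai \<in> carrier_mat n n" "invertible_mat Ai" "A * Ai = 1\<^sub>m n" "Ai * A = 1\<^sub>m n"
    using invertible_mat_inverse[OF assms(8,9)] .
  define T where "T = Ai * ?M ((!) zs) * A'"
  have T: "T \<in> carrier_mat n n" "invertible_mat T"
    unfolding T_def using Ai assms(10,11) \<open>invertible_mat (?M ((!) zs))\<close> n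
    by (auto intro!: invertible_mat_mult[of _ n])
  have B: "?M w * transpose_mat T \<in> carrier_mat n n" "invertible_mat (?M w * transpose_mat T)"
    using T \<open>invertible_mat (?M w)\<close> n by (auto intro!: invertible_mat_mult invertible_mat_transpose)
  have I: "invertible_mat (1\<^sub>m n :: 'p mod_ring mat)"
    by (simp add: invertible_mat_iff_det_nonzero[OF one_carrier_mat])
  show ?thesis
    by (rule exI[of _ "1\<^sub>m n"], rule exI[of _ "?M w * transpose_mat T"])
      (use lam_lattice_eq_mod_graph_lattice[of A A' Ai "(!) zs", folded T_def]
        lam_lattice_eq_neg_transpose_graph[of T "(!) zs" w] scaled_dual_mod_graph_lattice[OF T(1)]
        assms(8,10) Ai B I T zw n in simp)
qed

end
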